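(* Let $(\mathbb S,+,\cdot)$ be an S-Field. If $\alpha\in\mathbb S_0$ with $\alpha\neq 0$, then the Standard Base $q_0(\alpha)$ is Reversible, with $\alpha^*=\alpha^{-1}$; that is, $q_0(1)=\alpha^{-1}\cdot(q_0(\alpha)+\alpha)-\alpha$.
   Context: An S-Structure is a triple $(\mathbb S,+,\cdot)$ where $\mathbb S$ is a set and $+,\cdot$ are binary operations on $\mathbb S$ such that: $(\mathbb S,+)$ is a commutative group with identity $0$ (the inverse of $s$ is written $-s$, and $s-t:=s+(-t)$); $\mathbb S$ is closed under $\cdot$; and there exists $s\in\mathbb S$ with $0\cdot s\neq 0$ or $s\cdot 0\neq 0$. Multiplication binds tighter than addition. The structures considered come with a distinguished element of $\mathbb S$ denoted $1$. It is Commutative if $s\cdot t=t\cdot s$ for all $s,t$. For a Commutative S-Structure and $\alpha\in\mathbb S$, put $\mathbb S_\alpha=\{s\in\mathbb S:0\cdot s=s\cdot 0=\alpha\}$ and $\Lambda=\{\alpha\in\mathbb S:\mathbb S_\alpha\neq\emptyset\}$. Wheel Distributive: $s\cdot(t+r)+(s\cdot 0)=(s\cdot t)+(s\cdot r)$ for all $s,t,r\in\mathbb S$. S-Associative: for all $m,n\in\mathbb S_0$ and $s\in\mathbb S$, $m\cdot(n\cdot s)=(m\cdot n)\cdot s-([(m-1)\cdot(n-1)]\cdot(0\cdot s))$. Base: if $\mathbb S_0\neq\emptyset$ and $\alpha\in\Lambda$, $q\in\mathbb S_\alpha$ is a Base for $\mathbb S_\alpha$ if $q+\beta\in\mathbb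 S_\alpha$ for all $\beta\in\mathbb S_0$ and every $s\in\mathbb S_\alpha$ equals $q+\beta$ for some $\beta\in\mathbb S_0$. Coordinated: $\mathbb S_0\neq\emptyset$ and every $\mathbb S_\alpha$ with $\alpha\in\Lambda$ has a Base. Standard Bases: a Coordinated Commutative S-Structure has Standard Bases if there is a specified element $q_0(1)\in\mathbb S_1$ which is a Base for $\mathbb S_1$, and for every $\alpha\in\Lambda$ the element $q_0(\alpha):=\alpha\cdot(q_0(1)+1)-1$ (the Standard Base of $\mathbb S_\alpha$) lies in $\mathbb S_\alpha$ and is a Base for $\mathbb S_\alpha$. An Essential S-Structure is an S-Structure that is Commutative, Wheel Distributive, S-Associative, has Standard Bases (in particular is Coordinated), satisfies $0,1\in\mathbb S_0$, and satisfies $\mathbb S_0=\{1\cdot x:x\in\mathbb S_0\}$. A Unity is an element $e\in\Lambda$ with $e\cdot s=s\cdot e=s$ for all $s\in\mathbb S$. Scalar Inverses: the structure has a Unity $e$ and for every $x\in\mathbb S_0$ with $x\neq 0$ there is $x^{-1}\in\mathbb S_0$ with $x\cdot x^{-1}=x^{-1}\cdot x=e$. An S-Ring is an Essential S-Structure with a Unity; an S-Field is an S-Ring with Scalar Inverses. Reversible: in an Essential S-Structure, for $\alpha\in\Lambda$, the Standard Base $q_0(\alpha)$ is Reversible if there exists $\alpha^*\in\Lambda$ with $q_0(1)=\alpha^*\cdot(q_0(\alpha)+\alpha)-\alpha$. *)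

theory Defs
  imports Main
begin

(* The carrier S is the whole type 'a; (S,+) is the commutative group given by
   the class ab_group_add (identity 0, inverse uminus, s - t = s + (-t)).
   M is the multiplication, u is the distinguished element 1 of the structure,
   q1 is the specified Standard Base q_0(1). *)

definition S_structure :: "('a::ab_group_add \<Rightarrow> 'a \<Rightarrow> 'a) \<Rightarrow> bool" where
  "S_structure M \<longleftrightarrow> (\<exists>s. M 0 s \<noteq> 0 \<or> M s 0 \<noteq> 0)"

definition commutative :: "('a \<Rightarrow> 'a \<Rightarrow> 'a) \<Rightarrow> bool" where
  "commutative M \<longleftrightarrow> (\<forall>s t. M s t = M t s)"

definition Sa :: "('a::ab_group_add \<Rightarrow> 'a \<Rightarrow> 'a) \<Rightarrow> 'a \<Rightarrow> 'a set" where
  "Sa M a = {s. M 0 s = a \<and> M s 0 = a}"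

definition Lam :: "('a::ab_group_add \<Rightarrow> 'a \<Rightarrow> 'a) \<Rightarrow> 'a set" where
  "Lam M = {a. Sa M a \<noteq> {}}"

definition wheel_distributive :: "('a::ab_group_add \<Rightarrow> 'a \<Rightarrow> 'a) \<Rightarrow> bool" where
  "wheel_distributive M \<longleftrightarrow> (\<forall>s t r. M s (t + r) + M s 0 = M s t + M s r)"

definition S_associative :: "('a::ab_group_add \<Rightarrow> 'a \<Rightarrow> 'a) \<Rightarrow> 'a \<Rightarrow> bool" where
  "S_associative M u \<longleftrightarrow>
     (\<forall>m\<in>Sa M 0. \<forall>n\<in>Sa M 0. \<forall>s.
        M m (M n s) = M (M m n) s - M (M (m - u) (n - u)) (M 0 s))"

definition is_base :: "('a::ab_group_add \<Rightarrow> 'a \<Rightarrow> 'a) \<Rightarrow> 'a \<Rightarrow> 'a \<Rightarrow> bool" where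
  "is_base M a q \<longleftrightarrow> Sa M 0 \<noteq> {} \<and> a \<in> Lam M \<and> q \<in> Sa M a \<and>
     (\<forall>\<beta>\<in>Sa M 0. q + \<beta> \<in> Sa M a) \<and> (\<forall>s\<in>Sa M a. \<exists>\<beta>\<in>Sa M 0. s = q + \<beta>)"

definition coordinated :: "('a::ab_group_add \<Rightarrow> 'a \<Rightarrow> 'a) \<Rightarrow> bool" where
  "coordinated M \<longleftrightarrow> Sa M 0 \<noteq> {} \<and> (\<forall>a\<in>Lam M. \<exists>q. is_base M a q)"

definition q0 :: "('a::ab_group_add \<Rightarrow> 'a \<Rightarrow> 'a) \<Rightarrow> 'a \<Rightarrow> 'a \<Rightarrow> 'a \<Rightarrow> 'a" where
  "q0 M u q1 a = M a (q1 + u) - u"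

definition standard_bases :: "('a::ab_group_add \<Rightarrow> 'a \<Rightarrow> 'a) \<Rightarrow> 'a \<Rightarrow> 'a \<Rightarrow> bool" where
  "standard_bases M u q1 \<longleftrightarrow> coordinated M \<and> commutative M \<and>
     q1 \<in> Sa M u \<and> is_base M u q1 \<and>
     (\<forall>a\<in>Lam M. q0 M u q1 a \<in> Sa M a \<and> is_base M a (q0 M u q1 a))"

definition essential :: "('a::ab_group_add \<Rightarrow> 'a \<Rightarrow> 'a) \<Rightarrow> 'a \<Rightarrow> 'a \<Rightarrow> bool" where
  "essential M u q1 \<longleftrightarrow> S_structure M \<and> commutative M \<and> wheel_distributive M \<and>
     S_associative M u \<and> standard_bases M u q1 \<and> 0 \<in> Sa M 0 \<and> u \<in> Sa M 0 \<and>
     Sa M 0 = (\<lambda>x. M u x) ` Sa M 0"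

definition unity :: "('a::ab_group_add \<Rightarrow> 'a \<Rightarrow> 'a) \<Rightarrow> 'a \<Rightarrow> bool" where
  "unity M e \<longleftrightarrow> e \<in> Lam M \<and> (\<forall>s. M e s = s \<and> M s e = s)"

definition scalar_inverses :: "('a::ab_group_add \<Rightarrow> 'a \<Rightarrow> 'a) \<Rightarrow> bool" where
  "scalar_inverses M \<longleftrightarrow> (\<exists>e. unity M e \<and>
     (\<forall>x\<in>Sa M 0. x \<noteq> 0 \<longrightarrow> (\<exists>y\<in>Sa M 0. M x y = e \<and> M y x = e)))"

definition S_ring :: "('a::ab_group_add \<Rightarrow> 'a \<Rightarrow> 'a) \<Rightarrow> 'a \<Rightarrow> 'a \<Rightarrow> bool" where
  "S_ring M u q1 \<longleftrightarrow> essential M u q1 \<and> (\<exists>e. unity M e)"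

definition S_field :: "('a::ab_group_add \<Rightarrow> 'a \<Rightarrow> 'a) \<Rightarrow> 'a \<Rightarrow> 'a \<Rightarrow> bool" where
  "S_field M u q1 \<longleftrightarrow> S_ring M u q1 \<and> scalar_inverses M"

definition reversible :: "('a::ab_group_add \<Rightarrow> 'a \<Rightarrow> 'a) \<Rightarrow> 'a \<Rightarrow> 'a \<Rightarrow> 'a \<Rightarrow> bool" where
  "reversible M u q1 a \<longleftrightarrow> a \<in> Lam M \<and>
     (\<exists>a'\<in>Lam M. q1 = M a' (q0 M u q1 a + a) - a)"

end

theory Submission
  imports Defs
begin

text \<open>Elements of \<open>\<S>\<^sub>0\<close> act additively, and S-Associativity with \<open>n = 1\<close> lets a preimage
  of the unity under \<open>1 \<cdot> _\<close> cancel \<open>1 \<cdot> _\<close>; this forces the distinguished \<open>1\<close> to be the unity.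
  Then S-Associativity applied to \<open>\<alpha>\<^sup>-\<^sup>1 \<cdot> (\<alpha> \<cdot> (q\<^sub>0(1) + 1))\<close> reduces reversibility to a
  computation with scalars, and applied to \<open>0 \<cdot> (c \<cdot> q\<^sub>0(1))\<close> it shows \<open>\<S>\<^sub>0 \<subseteq> \<Lambda>\<close>.\<close>

locale essential_S_structure =
  fixes M :: "'a::ab_group_add \<Rightarrow> 'a \<Rightarrow> 'a" and u q1 :: 'a
  assumes essential: "essential M u q1"
begin

lemma mult_commute: "M s t = M t s"
  using essential unfolding essential_def commutative_def by blast

lemma Sa_iff: "s \<in> Sa M a \<longleftrightarrow> M 0 s = a"
  unfolding Sa_def using mult_commute by auto

lemma Lam_iff: "a \<in> Lam M \<longleftrightarrow> (\<exists>s. M 0 s = a)"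
  unfolding Lam_def using Sa_iff by auto

lemma mult_zero_right: "c \<in> Sa M 0 \<Longrightarrow> M c 0 = 0"
  unfolding Sa_def by blast

lemma zero_in_Sa0: "0 \<in> Sa M 0"
  and one_in_Sa0: "u \<in> Sa M 0"
  and Sa0_image_one: "Sa M 0 = M u ` Sa M 0"
  using essential unfolding essential_def by blast+

lemma zero_mult_q1: "M 0 q1 = u"
  using essential unfolding essential_def standard_bases_def Sa_iff by blast

lemma S_assoc: "m \<in> Sa M 0 \<Longrightarrow> n \<in> Sa M 0 \<Longrightarrow>
    M m (M n s) = M (M m n) s - M (M (m - u) (n - u)) (M 0 s)"
  using essential unfolding essential_def S_associative_def by blast

lemma scalar_mult_add: "c \<in> Sa M 0 \<Longrightarrow> M c (t + r) = M c t + M c r"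
  using essential mult_zero_right[of c] unfolding essential_def wheel_distributive_def
  by (metis add.right_neutral)

lemma scalar_mult_minus: "c \<in> Sa M 0 \<Longrightarrow> M c (- t) = - M c t"
  using scalar_mult_add[of c t "- t"] mult_zero_right[of c]
  by (simp add: eq_neg_iff_add_eq_0 add.commute)

lemma scalar_mult_diff: "c \<in> Sa M 0 \<Longrightarrow> M c (t - r) = M c t - M c r"
  using scalar_mult_add[of c t "- r"] scalar_mult_minus[of c r] by simp

lemma Sa0_diff: "x \<in> Sa M 0 \<Longrightarrow> y \<in> Sa M 0 \<Longrightarrow> x - y \<in> Sa M 0"
  using scalar_mult_diff[OF zero_in_Sa0] by (simp add: Sa_iff)

lemma S_assoc_one: "m \<in> Sa M 0 \<Longrightarrow> M m (M u s) = M (M m u) s - M 0 (M 0 s)"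
  using S_assoc[OF _ one_in_Sa0] mult_zero_right[OF Sa0_diff[OF _ one_in_Sa0]] by simp

end

locale S_ring_with_unity = essential_S_structure +
  fixes e :: "'a::ab_group_add"
  assumes unity: "unity M e"
begin

lemma unity_mult_left: "M e s = s" and unity_mult_right: "M s e = s"
  using unity unfolding unity_def by blast+

lemma unity_in_Sa0: "e \<in> Sa M 0"
  using unity_mult_right[of 0] by (simp add: Sa_iff)

lemma zero_mult_zero_mult: "M 0 (M 0 s) = 0"
  using S_assoc_one[OF unity_in_Sa0, of s] by (simp add: unity_mult_left)

lemma one_mult_cancel:
  assumes "x \<in> Sa M 0" and "M u x = e"
  shows "M x (M u s) = s"
  using S_assoc_one[OF assms(1), of s] assms(2) zero_mult_zero_mult mult_commute[of x u]
  by (simp add: unity_mult_left)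

lemma one_mult_one_idem: "M u (M u u) = M u u"
proof -
  have "M e (M 0 q1) = M (M e 0) q1 - M (M (e - u) (0 - u)) (M 0 q1)"
    using S_assoc[OF unity_in_Sa0 zero_in_Sa0] .
  then have "M (M (e - u) (- u)) u = 0"
    by (simp add: zero_mult_q1 unity_mult_left)
  moreover have "M (e - u) (- u) = M u u - u"
    using scalar_mult_minus[OF Sa0_diff[OF unity_in_Sa0 one_in_Sa0], of u]
      scalar_mult_diff[OF one_in_Sa0, of e u] mult_commute[of "e - u" u] mult_commute[of u e]
    by (simp add: unity_mult_right)
  ultimately show ?thesis
    using scalar_mult_diff[OF one_in_Sa0, of "M u u" u] mult_commute[of "M u u - u" u] by simp
qed

lemma one_eq_unity: "u = e"
proof -
  have "e \<in> M u ` Sa M 0" using unity_in_Sa0 Sa0_image_one by simp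
  then obtain x where "x \<in> Sa M 0" and "M u x = e" by blast
  then have cancel: "M x (M u s) = s" for s by (rule one_mult_cancel)
  have "M u u = u" using cancel[of "M u u"] cancel[of u] one_mult_one_idem by simp
  then have "M x u = u" using cancel[of u] by simp
  moreover have "M x u = e" using cancel[of e] by (simp add: unity_mult_right)
  ultimately show ?thesis by simp
qed

lemma Sa0_subset_Lam: "c \<in> Sa M 0 \<Longrightarrow> c \<in> Lam M"
proof -
  assume c: "c \<in> Sa M 0"
  have "M (- e) (c - e) = - (c - e)"
    using scalar_mult_minus[OF Sa0_diff[OF c unity_in_Sa0]] mult_commute unity_mult_right
    by metis
  then have "M 0 (M c q1) = c"
    using S_assoc[OF zero_in_Sa0 c, of q1] c
    by (simp add: Sa_iff one_eq_unity zero_mult_q1 unity_mult_right)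
  then show ?thesis by (auto simp: Lam_iff)
qed

lemma inverse_mult_q0:
  assumes a: "a \<in> Sa M 0" and b: "b \<in> Sa M 0" and ab: "M a b = e"
  shows "M b (q0 M u q1 a + a) = q1 + a"
proof -
  have ba: "M b a = e" using ab mult_commute[of b a] by simp
  have "M 0 (q1 + e) = e"
    using scalar_mult_add[OF zero_in_Sa0] unity_in_Sa0 zero_mult_q1 one_eq_unity
    by (simp add: Sa_iff)
  then have "M b (M a (q1 + e)) = q1 + e - M (b - e) (a - e)"
    using S_assoc[OF b a, of "q1 + e"] by (simp add: ba one_eq_unity unity_mult_left unity_mult_right)
  moreover have "M (b - e) (a - e) = e - a - (b - e)"
    using scalar_mult_diff[OF Sa0_diff[OF b unity_in_Sa0], of a e] scalar_mult_diff[OF a, of b e]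
      mult_commute[of "b - e" a] ab by (simp add: unity_mult_right)
  ultimately show ?thesis
    unfolding q0_def one_eq_unity
    using scalar_mult_add[OF b] scalar_mult_diff[OF b] ba by (simp add: unity_mult_right)
qed

end

theorem proposition4p2p1:
  fixes M :: "'a::ab_group_add \<Rightarrow> 'a \<Rightarrow> 'a" and u q1 e a b :: 'a
  assumes "S_field M u q1"
    and "a \<in> Sa M 0" and "a \<noteq> 0"
    and "unity M e"
    and "b \<in> Sa M 0" and "M a b = e" and "M b a = e"
  shows "reversible M u q1 a \<and> b \<in> Lam M \<and> q1 = M b (q0 M u q1 a + a) - a"
proof -
  interpret S_ring_with_unity M u q1 e
    using assms(1,4) by unfold_locales (simp add: S_field_def S_ring_def)
  have "q1 = M b (q0 M u q1 a + a) - a"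
    using inverse_mult_q0[OF assms(2,5,6)] by simp
  then show ?thesis
    unfolding reversible_def using Sa0_subset_Lam assms(2,5) by blast
qed

end
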